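(* Consider the discrete-time per-UE credit recursion described in the context, under either debit rule (CBS-DT or CBS-PU). Then: (i) (Bounded credit) for every UE $u$ and every slot $n\ge 0$, $C_u[n]\in[lo_u,hi_u]$; (ii) (Deterministic deficit recovery) if $C_u[k]<0$ for some slot $k$ and no new transmission grant is issued to $u$ in slots $k,k+1,\dots$, then $C_u$ reaches a non-negative value after finitely many slots. Specifically, the recovery time from the worst-case deficit $lo_u$, assuming no grants are issued, is the deterministic value $T^{\mathrm{rec}}_{\max}=\left\lceil -lo_u/\Delta C_u\right\rceil\cdot T_{\mathrm{slot}}$, and this value is tight.
   Context: Time is slotted: slots $n\in\mathbb{Z}_{\ge0}$ have duration $T_{\mathrm{slot}}>0$. A base station serves a finite set of UEs $\{1,\dots,U\}$. For each UE $u$: $Q_u[n]\in\mathbb{Z}_{\ge0}$ is its downlink backlog (bytes) at the start of slot $n$; $G_u[n]\in\{0,1\}$ indicates whether $u$ receives a new (non-retransmission) grant in slot $n$, with transport block size $\mathrm{TBS}_u[n]\ge 0$ bytes. Each UE has a per-slot credit allowance $\Delta C_u=\texttt{idleSlope}_{p(u)}\cdot T_{\mathrm{slot}}>0$ (bytes) and credit bounds $lo_u<0<hi_u$. Define $f(C,\Delta C,Q)=\min(C+\Delta C,0)$ if $C<0$; $f(C,\Delta C,Q)=0$ if $C>0$ and $Q=0$; $f(C,\Delta C,Q)=C+\Delta C$ otherwise. The credit evolves as $C_u[n+1]=\min\{\max\{f(C_u[n],\Delta C_u,Q_u[n])-D_u[n],\,lo_u\},\,hi_u\}$, starting from some $C_u[0]\in[lo_u,hi_u]$,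 where the debit is $D_u[n]=0$ if $G_u[n]=0$, and otherwise $D_u[n]=\mathrm{TBS}_u[n]$ (variant CBS-DT) or $D_u[n]=\min\{\mathrm{TBS}_u[n],Q_u[n]\}$ (variant CBS-PU). A UE is eligible for a new grant in slot $n$ only if (besides MAC conditions: $Q_u[n]>0$, a free HARQ process, not scheduled for HARQ retransmission in slot $n$) $C_u[n]\ge 0$. *)

theory Defs
  imports Complex_Main
begin

datatype cbs_variant = CBS_DT | CBS_PU

definition cbs_f :: "real \<Rightarrow> real \<Rightarrow> nat \<Rightarrow> real" where
  "cbs_f C dC Q =
     (if C < 0 then min (C + dC) 0
      else if C > 0 \<and> Q = 0 then 0
      else C + dC)"

text \<open>Debit D[n]; the grant indicator G[n] in {0,1} is rendered as a boolean.\<close>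
definition cbs_debit :: "cbs_variant \<Rightarrow> bool \<Rightarrow> real \<Rightarrow> nat \<Rightarrow> real" where
  "cbs_debit v G TBS Q =
     (if \<not> G then 0
      else (case v of CBS_DT \<Rightarrow> TBS | CBS_PU \<Rightarrow> min TBS (real Q)))"

primrec cbs_credit ::
  "cbs_variant \<Rightarrow> real \<Rightarrow> real \<Rightarrow> real \<Rightarrow> (nat \<Rightarrow> nat) \<Rightarrow> (nat \<Rightarrow> bool)
   \<Rightarrow> (nat \<Rightarrow> real) \<Rightarrow> real \<Rightarrow> nat \<Rightarrow> real" where
  "cbs_credit v lo hi dC Q G TBS C0 0 = C0"
| "cbs_credit v lo hi dC Q G TBS C0 (Suc n) =
     min (max (cbs_f (cbs_credit v lo hi dC Q G TBS C0 n) dC (Q n)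
               - cbs_debit v (G n) (TBS n) (Q n)) lo) hi"

end

theory Submission
  imports Defs
begin

text \<open>The final clamp keeps every credit in \<open>[lo, hi]\<close>. Without grants, a negative credit
  \<open>c \<ge> lo\<close> evolves as \<open>min (c + m \<cdot> dC) 0\<close>: the replenishment \<open>min (C + dC) 0\<close> never
  leaves \<open>[lo, 0]\<close>, so the clamp is inactive. Hence the credit first becomes non-negative
  exactly after \<open>\<lceil>-c / dC\<rceil>\<close> slots, which is monotone in the deficit and attains its maximum
  \<open>\<lceil>-lo / dC\<rceil>\<close> at \<open>c = lo\<close>.\<close>

lemma nonneg_add_mult_iff_nat_ceiling_le:
  fixes c d :: real
  assumes "d > 0"
  shows "0 \<le> c + real m * d \<longleftrightarrow> nat \<lceil>- c / d\<rceil> \<le> m"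
proof -
  have "0 \<le> c + real m * d \<longleftrightarrow> - c \<le> real m * d"
    by linarith
  also have "\<dots> \<longleftrightarrow> - c / d \<le> real m"
    by (simp only: pos_divide_le_eq[OF assms])
  also have "\<dots> \<longleftrightarrow> \<lceil>- c / d\<rceil> \<le> int m"
    by (simp add: ceiling_le_iff)
  also have "\<dots> \<longleftrightarrow> nat \<lceil>- c / d\<rceil> \<le> m"
    by linarith
  finally show ?thesis .
qed

lemma cbs_credit_bounded:
  assumes "lo \<le> hi" and "lo \<le> C0" and "C0 \<le> hi"
  shows "lo \<le> cbs_credit v lo hi dC Q G TBS C0 n \<and> cbs_credit v lo hi dC Q G TBS C0 n \<le> hi"
  using assms by (cases n) auto

lemma cbs_credit_Suc_deficit:
  assumes "0 \<le> dC" and "0 < hi" and "\<not> G n"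
    and "lo \<le> cbs_credit v lo hi dC Q G TBS C0 n" and "cbs_credit v lo hi dC Q G TBS C0 n < 0"
  shows "cbs_credit v lo hi dC Q G TBS C0 (Suc n) = min (cbs_credit v lo hi dC Q G TBS C0 n + dC) 0"
  using assms by (simp add: cbs_f_def cbs_debit_def)

lemma cbs_credit_idle_deficit:
  assumes dC_pos: "0 < dC" and hi_pos: "0 < hi" and idle: "\<forall>n\<ge>k. \<not> G n"
    and lo_le: "lo \<le> cbs_credit v lo hi dC Q G TBS C0 k"
    and deficit: "cbs_credit v lo hi dC Q G TBS C0 k < 0"
    and "m \<le> nat \<lceil>- cbs_credit v lo hi dC Q G TBS C0 k / dC\<rceil>"
  shows "cbs_credit v lo hi dC Q G TBS C0 (k + m) = min (cbs_credit v lo hi dC Q G TBS C0 k + real m * dC) 0"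
  using \<open>m \<le> _\<close>
proof (induction m)
  case 0
  then show ?case using deficit by simp
next
  case (Suc m)
  let ?c = "cbs_credit v lo hi dC Q G TBS C0 k"
  have still_negative: "?c + real m * dC < 0"
    using Suc.prems nonneg_add_mult_iff_nat_ceiling_le[OF dC_pos, of ?c m] by linarith
  then have IH: "cbs_credit v lo hi dC Q G TBS C0 (k + m) = ?c + real m * dC"
    using Suc by simp
  have "0 \<le> real m * dC"
    using dC_pos by simp
  with lo_le have "lo \<le> ?c + real m * dC"
    by linarith
  then have "cbs_credit v lo hi dC Q G TBS C0 (Suc (k + m)) = min (?c + real m * dC + dC) 0"
    using cbs_credit_Suc_deficit[of dC hi G "k + m" lo v Q TBS C0] dC_pos hi_pos idle
      still_negative IH by simp
  then show ?case by (simp add: algebra_simps)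
qed

lemma cbs_credit_idle_recovery_time:
  assumes "0 < dC" and "0 < hi" and "\<forall>n\<ge>k. \<not> G n"
    and "lo \<le> cbs_credit v lo hi dC Q G TBS C0 k" and "cbs_credit v lo hi dC Q G TBS C0 k < 0"
  defines "M \<equiv> nat \<lceil>- cbs_credit v lo hi dC Q G TBS C0 k / dC\<rceil>"
  shows "0 \<le> cbs_credit v lo hi dC Q G TBS C0 (k + M)"
    and "(LEAST m. 0 \<le> cbs_credit v lo hi dC Q G TBS C0 (k + m)) = M"
proof -
  have credit_nonneg_iff: "0 \<le> cbs_credit v lo hi dC Q G TBS C0 (k + m) \<longleftrightarrow> m = M"
    if "m \<le> M" for m
  proof -
    have "cbs_credit v lo hi dC Q G TBS C0 (k + m) = min (cbs_credit v lo hi dC Q G TBS C0 k + real m * dC) 0"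
      using cbs_credit_idle_deficit[OF assms(1-5)] that unfolding M_def .
    moreover have "0 \<le> cbs_credit v lo hi dC Q G TBS C0 k + real m * dC \<longleftrightarrow> M \<le> m"
      unfolding M_def by (rule nonneg_add_mult_iff_nat_ceiling_le[OF \<open>0 < dC\<close>])
    ultimately show ?thesis
      using that by linarith
  qed
  then show recovered: "0 \<le> cbs_credit v lo hi dC Q G TBS C0 (k + M)"
    by simp
  show "(LEAST m. 0 \<le> cbs_credit v lo hi dC Q G TBS C0 (k + m)) = M"
  proof (rule Least_equality)
    fix m
    assume "0 \<le> cbs_credit v lo hi dC Q G TBS C0 (k + m)"
    then show "M \<le> m"
      using credit_nonneg_iff nat_le_linear by metis
  qed (fact recovered)
qed

theorem mainTheorem1:
  fixes v :: cbs_variant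
    and Tslot :: real
    and p :: "'u::finite \<Rightarrow> 'p"
    and idleSlope :: "'p \<Rightarrow> real"
    and lo hi C0 :: "'u \<Rightarrow> real"
    and Q :: "'u \<Rightarrow> nat \<Rightarrow> nat"
    and G :: "'u \<Rightarrow> nat \<Rightarrow> bool"
    and TBS :: "'u \<Rightarrow> nat \<Rightarrow> real"
  defines "dC \<equiv> \<lambda>u. idleSlope (p u) * Tslot"
    and "C \<equiv> \<lambda>u. cbs_credit v (lo u) (hi u) (idleSlope (p u) * Tslot) (Q u) (G u) (TBS u) (C0 u)"
  assumes Tslot_pos: "Tslot > 0"
    and dC_pos: "\<forall>u. dC u > 0"
    and bounds: "\<forall>u. lo u < 0 \<and> 0 < hi u"
    and init: "\<forall>u. lo u \<le> C0 u \<and> C0 u \<le> hi u"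
    and TBS_nonneg: "\<forall>u n. TBS u n \<ge> 0"
    and eligible: "\<forall>u n. G u n \<longrightarrow> Q u n > 0 \<and> C u n \<ge> 0"
  shows "(\<forall>u n. lo u \<le> C u n \<and> C u n \<le> hi u)
       \<and> (\<forall>u k. C u k < 0 \<and> (\<forall>n\<ge>k. \<not> G u n) \<longrightarrow> (\<exists>m. 0 \<le> C u (k + m)))
       \<and> (\<forall>u k. C u k < 0 \<and> (\<forall>n\<ge>k. \<not> G u n) \<longrightarrow>
              real (LEAST m. 0 \<le> C u (k + m)) * Tslot \<le> of_int \<lceil>- lo u / dC u\<rceil> * Tslot)
       \<and> (\<forall>u k. C u k = lo u \<and> (\<forall>n\<ge>k. \<not> G u n) \<longrightarrow>
              real (LEAST m. 0 \<le> C u (k + m)) * Tslot = of_int \<lceil>- lo u / dC u\<rceil> * Tslot)"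
proof -
  have bounded: "lo u \<le> C u n \<and> C u n \<le> hi u" for u n
    unfolding C_def using cbs_credit_bounded bounds init by (metis less_le_trans order_less_imp_le)
  have recovery: "0 \<le> C u (k + nat \<lceil>- C u k / dC u\<rceil>)
      \<and> real (LEAST m. 0 \<le> C u (k + m)) = of_int \<lceil>- C u k / dC u\<rceil>"
    if "C u k < 0" and "\<forall>n\<ge>k. \<not> G u n" for u k
  proof -
    have "0 < - C u k / dC u"
      using \<open>C u k < 0\<close> dC_pos by (simp add: divide_neg_pos)
    then show ?thesis
      using cbs_credit_idle_recovery_time[of "dC u" "hi u" k "G u" "lo u" v] that dC_pos bounds bounded
      unfolding C_def dC_def by simp
  qed
  have worst_case: "\<lceil>- C u k / dC u\<rceil> \<le> \<lceil>- lo u / dC u\<rceil>" for u k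
    using bounded dC_pos by (intro ceiling_mono divide_right_mono) (auto intro: less_imp_le)
  show ?thesis
  proof (intro conjI allI impI)
    fix u k
    assume "C u k < 0 \<and> (\<forall>n\<ge>k. \<not> G u n)"
    then show "\<exists>m. 0 \<le> C u (k + m)"
      using recovery by blast
  next
    fix u k
    assume "C u k < 0 \<and> (\<forall>n\<ge>k. \<not> G u n)"
    then show "real (LEAST m. 0 \<le> C u (k + m)) * Tslot \<le> of_int \<lceil>- lo u / dC u\<rceil> * Tslot"
      using recovery worst_case[of u k] Tslot_pos by simp
  next
    fix u k
    assume "C u k = lo u \<and> (\<forall>n\<ge>k. \<not> G u n)"
    then show "real (LEAST m. 0 \<le> C u (k + m)) * Tslot = of_int \<lceil>- lo u / dC u\<rceil> * Tslot"
      using recovery[of u k] bounds by simp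
  qed (use bounded in blast)+
qed

end
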